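(* Let $\Gamma_F\subset\mathbb R^4_{\ge0}$ be the Newton polyhedron of the set $$\{(21,0,0,0),(0,21,0,0),(0,0,5,0),(0,0,0,5),(0,2,1,0),(2,0,0,1),(1,1,1,0),(1,1,0,1)\},$$ and let $\Gamma_G$ be the Newton polyhedron of this set together with $W=(10,10,0,0)$. Then $\Gamma_F\subsetneq\Gamma_G$ and $\nu(\Gamma_F)=\nu(\Gamma_G)$.
   Context: The Newton polyhedron of a finite $\mathbf S\subset\mathbb Z^4_{\ge0}$ is $\mathrm{Conv}\bigcup_{a\in\mathbf S}(a+\mathbb R^4_{\ge0})$. For a convenient Newton polyhedron $\Gamma\subset\mathbb R^n_{\ge0}$, the Newton number is $$\nu(\Gamma)=\sum_{\emptyset\ne J\subseteq\{1..n\}}(-1)^{n-|J|}|J|!\,\mathrm{Vol}_{|J|}(\mathbb R^J_{\ge0}\setminus\Gamma)+(-1)^n,$$ where $\mathbb R^J$ is spanned by $e_j$, $j\in J$. *)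

theory Defs
  imports "HOL-Analysis.Analysis"
begin

definition newton_polyhedron :: "(real^'n) set \<Rightarrow> (real^'n) set" where
  "newton_polyhedron S = convex hull (\<Union>a\<in>S. {a + y | y. \<forall>i. 0 \<le> y $ i})"

text \<open>The |J|-dimensional volume of R^J_{>=0} minus Gamma, where R^J is the coordinate
subspace spanned by the e_j, j in J; it is identified with the functions J -> R
carrying the product Lebesgue measure, and a point x is embedded into R^n by
putting zeros in the coordinates outside J.\<close>
definition coord_vol :: "(real^'n) set \<Rightarrow> 'n set \<Rightarrow> real" where
  "coord_vol \<Gamma> J = measure (PiM J (\<lambda>_. lborel))
     {x \<in> PiE J (\<lambda>_. UNIV). (\<forall>j\<in>J. 0 \<le> x j) \<and>
        (\<chi> i. if i \<in> J then x i else 0) \<notin> \<Gamma>}"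

definition newton_number :: "(real^'n) set \<Rightarrow> real" where
  "newton_number \<Gamma> =
     (\<Sum>J\<in>{J. J \<noteq> {}}. (-1) ^ (CARD('n) - card J) * fact (card J) * coord_vol \<Gamma> J)
     + (-1) ^ CARD('n)"

definition S_F :: "(real^4) set" where
  "S_F = {vector [21,0,0,0], vector [0,21,0,0], vector [0,0,5,0], vector [0,0,0,5],
          vector [0,2,1,0], vector [2,0,0,1], vector [1,1,1,0], vector [1,1,0,1]}"

definition W_pt :: "real^4" where
  "W_pt = vector [10,10,0,0]"

end

theory Submission
  imports Defs
begin

text \<open>Both polyhedra are described by explicit facet inequalities. Each inequality holds at the
generators, and conversely a point satisfying them is pushed radially onto a facet, where explicit
barycentric coordinates with respect to four generators show that it lies in the convex hull.
\<open>\<Gamma>\<^sub>G\<close> replaces the facet \<open>a + b + 19c + 19d \<ge> 21\<close> of \<open>\<Gamma>\<^sub>F\<close> by three facets through \<open>W\<close>, so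
\<open>\<Gamma>\<^sub>G - \<Gamma>\<^sub>F\<close> is a thin region over which the shear \<open>s = a + b + 19c + 19d - 20\<close> becomes an
iterated integral over \<open>0 \<le> c, d, c + d \<le> s < 1\<close> with \<open>b\<close>-sections of length \<open>21s - 20c - 20d\<close>.
This region meets \<open>\<real>\<^sup>J\<close> only for \<open>J \<supseteq> {1,2}\<close>, with volumes \<open>21/2\<close>, \<open>11/3\<close>, \<open>11/3\<close>, \<open>23/24\<close>,
and \<open>2! \<cdot> 21/2 - 3! \<cdot> (11/3 + 11/3) + 4! \<cdot> 23/24 = 0\<close>.\<close>

lemma convex_newton_polyhedron: "convex (newton_polyhedron S)"
  unfolding newton_polyhedron_def by (rule convex_convex_hull)

lemma newton_polyhedron_mono: "S \<subseteq> T \<Longrightarrow> newton_polyhedron S \<subseteq> newton_polyhedron T"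
  unfolding newton_polyhedron_def by (intro hull_mono) blast

lemma newton_polyhedron_shift: "a \<in> S \<Longrightarrow> \<forall>i. 0 \<le> k $ i \<Longrightarrow> a + k \<in> newton_polyhedron S"
  unfolding newton_polyhedron_def by (rule hull_inc) blast

lemma newton_polyhedron_least:
  assumes "convex C" "\<And>a k. a \<in> S \<Longrightarrow> \<forall>i. 0 \<le> k $ i \<Longrightarrow> a + k \<in> C"
  shows "newton_polyhedron S \<subseteq> C"
  unfolding newton_polyhedron_def using assms by (intro hull_minimal) auto

lemma newton_polyhedron_hull_shift:
  fixes S :: "(real^'n) set"
  assumes "q \<in> convex hull S" "\<forall>i. 0 \<le> k $ i"
  shows "q + k \<in> newton_polyhedron S"
proof -
  define T where "T = {q. \<forall>k. (\<forall>i. 0 \<le> k $ i) \<longrightarrow> q + k \<in> newton_polyhedron S}"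
  have "convex T"
  proof (rule convexI)
    fix x y :: "real^'n" and u v :: real
    assume "x \<in> T" "y \<in> T" "0 \<le> u" "0 \<le> v" "u + v = 1"
    show "u *\<^sub>R x + v *\<^sub>R y \<in> T" unfolding T_def
    proof (intro CollectI allI impI)
      fix k :: "real^'n" assume "\<forall>i. 0 \<le> k $ i"
      with \<open>x \<in> T\<close> \<open>y \<in> T\<close> have "x + k \<in> newton_polyhedron S" "y + k \<in> newton_polyhedron S"
        by (auto simp: T_def)
      then have "u *\<^sub>R (x + k) + v *\<^sub>R (y + k) \<in> newton_polyhedron S"
        using convex_newton_polyhedron \<open>0 \<le> u\<close> \<open>0 \<le> v\<close> \<open>u + v = 1\<close> by (intro convexD) auto
      also have "u *\<^sub>R (x + k) + v *\<^sub>R (y + k) = u *\<^sub>R x + v *\<^sub>R y + (u + v) *\<^sub>R k"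
        by (simp add: algebra_simps)
      finally show "u *\<^sub>R x + v *\<^sub>R y + k \<in> newton_polyhedron S"
        using \<open>u + v = 1\<close> by simp
    qed
  qed
  moreover have "S \<subseteq> T"
    using newton_polyhedron_shift by (auto simp: T_def)
  ultimately have "convex hull S \<subseteq> T"
    by (intro hull_minimal)
  then show ?thesis
    using assms by (auto simp: T_def)
qed

lemma newton_polyhedron_scaled_hull:
  fixes y :: "real^'n"
  assumes "\<forall>i. 0 \<le> y $ i" "1 \<le> t" "(1 / t) *\<^sub>R y \<in> convex hull S"
  shows "y \<in> newton_polyhedron S"
proof -
  have "\<forall>i. 0 \<le> (y - (1 / t) *\<^sub>R y) $ i"
  proof
    fix i
    have "0 \<le> (1 - 1 / t) * y $ i"
      using assms(1,2) by simp
    then show "0 \<le> (y - (1 / t) *\<^sub>R y) $ i"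
      by (simp add: algebra_simps)
  qed
  from newton_polyhedron_hull_shift[OF assms(3) this] show ?thesis
    by simp
qed

lemma convex_hull_combination4:
  assumes "a \<in> S" "b \<in> S" "c \<in> S" "d \<in> S" "0 \<le> u" "0 \<le> v" "0 \<le> w" "0 \<le> z" "u + v + w + z = 1"
    and "x = u *\<^sub>R a + v *\<^sub>R b + w *\<^sub>R c + z *\<^sub>R d"
  shows "x \<in> convex hull S"
proof -
  have "(\<Sum>i\<in>{0::nat,1,2,3}. ([u,v,w,z] ! i) *\<^sub>R ([a,b,c,d] ! i)) \<in> convex hull S"
    using assms by (intro convex_sum convex_convex_hull) (auto simp: hull_inc add.assoc)
  then show ?thesis
    using assms(10) by (simp add: add.assoc)
qed

lemma vector4_nth [simp]:
  "(vector [a, b, c, d] :: real^4) $ 1 = a" "(vector [a, b, c, d] :: real^4) $ 2 = b"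
  "(vector [a, b, c, d] :: real^4) $ 3 = c" "(vector [a, b, c, d] :: real^4) $ 4 = d"
  by (simp_all add: vector_def)

lemma vec4_eq_iff: "(x::real^4) = y \<longleftrightarrow> x$1 = y$1 \<and> x$2 = y$2 \<and> x$3 = y$3 \<and> x$4 = y$4"
  by (simp add: vec_eq_iff forall_4)

definition facet_ineqs_F :: "real \<Rightarrow> real \<Rightarrow> real \<Rightarrow> real \<Rightarrow> bool" where
  "facet_ineqs_F a b c d \<longleftrightarrow> 0 \<le> a \<and> 0 \<le> b \<and> 0 \<le> c \<and> 0 \<le> d \<and>
     21 \<le> a + b + 19*c + 19*d \<and> 5 \<le> 2*a + 2*b + c + d \<and>
     105 \<le> 5*a + 79*b + 21*c + 95*d \<and> 105 \<le> 79*a + 5*b + 95*c + 21*d"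

definition facet_ineqs_G :: "real \<Rightarrow> real \<Rightarrow> real \<Rightarrow> real \<Rightarrow> bool" where
  "facet_ineqs_G a b c d \<longleftrightarrow> 0 \<le> a \<and> 0 \<le> b \<and> 0 \<le> c \<and> 0 \<le> d \<and>
     20 \<le> a + b + 18*c + 18*d \<and> 5 \<le> 2*a + 2*b + c + d \<and>
     105 \<le> 5*a + 79*b + 21*c + 95*d \<and> 105 \<le> 79*a + 5*b + 95*c + 21*d \<and>
     210 \<le> 10*a + 11*b + 189*c + 190*d \<and> 210 \<le> 11*a + 10*b + 190*c + 189*d"

lemma facet_ineqs_F_imp_G: "facet_ineqs_F a b c d \<Longrightarrow> facet_ineqs_G a b c d"
  unfolding facet_ineqs_F_def facet_ineqs_G_def by linarith

lemma convex_facet_ineqs_F: "convex {y::real^4. facet_ineqs_F (y$1) (y$2) (y$3) (y$4)}"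
proof -
  have "{y::real^4. facet_ineqs_F (y$1) (y$2) (y$3) (y$4)} =
    {y. 0 \<le> vector [1,0,0,0] \<bullet> y} \<inter> {y. 0 \<le> vector [0,1,0,0] \<bullet> y} \<inter>
    {y. 0 \<le> vector [0,0,1,0] \<bullet> y} \<inter> {y. 0 \<le> vector [0,0,0,1] \<bullet> y} \<inter>
    {y. 21 \<le> vector [1,1,19,19] \<bullet> y} \<inter> {y. 5 \<le> vector [2,2,1,1] \<bullet> y} \<inter>
    {y. 105 \<le> vector [5,79,21,95] \<bullet> y} \<inter> {y. 105 \<le> vector [79,5,95,21] \<bullet> y}"
    by (auto simp: facet_ineqs_F_def inner_vec_def sum_4)
  then show ?thesis
    by (simp only:) (intro convex_Int convex_halfspace_ge)
qed

lemma convex_facet_ineqs_G: "convex {y::real^4. facet_ineqs_G (y$1) (y$2) (y$3) (y$4)}"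
proof -
  have "{y::real^4. facet_ineqs_G (y$1) (y$2) (y$3) (y$4)} =
    {y. 0 \<le> vector [1,0,0,0] \<bullet> y} \<inter> {y. 0 \<le> vector [0,1,0,0] \<bullet> y} \<inter>
    {y. 0 \<le> vector [0,0,1,0] \<bullet> y} \<inter> {y. 0 \<le> vector [0,0,0,1] \<bullet> y} \<inter>
    {y. 20 \<le> vector [1,1,18,18] \<bullet> y} \<inter> {y. 5 \<le> vector [2,2,1,1] \<bullet> y} \<inter>
    {y. 105 \<le> vector [5,79,21,95] \<bullet> y} \<inter> {y. 105 \<le> vector [79,5,95,21] \<bullet> y} \<inter>
    {y. 210 \<le> vector [10,11,189,190] \<bullet> y} \<inter> {y. 210 \<le> vector [11,10,190,189] \<bullet> y}"
    by (auto simp: facet_ineqs_G_def inner_vec_def sum_4)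
  then show ?thesis
    by (simp only:) (intro convex_Int convex_halfspace_ge)
qed

lemma facet_ineqs_F_divide:
  assumes "0 < s" "0 \<le> a" "0 \<le> b" "0 \<le> c" "0 \<le> d"
    "21 * s \<le> a + b + 19*c + 19*d" "5 * s \<le> 2*a + 2*b + c + d"
    "105 * s \<le> 5*a + 79*b + 21*c + 95*d" "105 * s \<le> 79*a + 5*b + 95*c + 21*d"
  shows "facet_ineqs_F (a / s) (b / s) (c / s) (d / s)"
  using assms
  by (simp add: facet_ineqs_F_def add_divide_distrib[symmetric] pos_le_divide_eq)

definition v1 :: "real^4" where "v1 = vector [21, 0, 0, 0]"
definition v2 :: "real^4" where "v2 = vector [0, 21, 0, 0]"
definition v3 :: "real^4" where "v3 = vector [0, 0, 5, 0]"
definition v4 :: "real^4" where "v4 = vector [0, 0, 0, 5]"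
definition v5 :: "real^4" where "v5 = vector [0, 2, 1, 0]"
definition v6 :: "real^4" where "v6 = vector [2, 0, 0, 1]"
definition v7 :: "real^4" where "v7 = vector [1, 1, 1, 0]"
definition v8 :: "real^4" where "v8 = vector [1, 1, 0, 1]"

lemmas S_F_point_defs = v1_def v2_def v3_def v4_def v5_def v6_def v7_def v8_def

lemma S_F_eq: "S_F = {v1, v2, v3, v4, v5, v6, v7, v8}"
  by (simp add: S_F_def S_F_point_defs)

lemma facet_1_1_19_19_in_hull:
  assumes F: "facet_ineqs_F (q$1) (q$2) (q$3) (q$4)" and on: "q$1 + q$2 + 19*q$3 + 19*q$4 = 21"
  shows "q \<in> convex hull S_F"
proof -
  consider "2*q$3 + q$4 \<le> q$2" | "2*q$3 \<le> q$2" "q$2 \<le> 2*q$3 + q$4" | "q$2 \<le> 2*q$3"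
    by linarith
  then show ?thesis
  proof cases
    case 1
    show ?thesis
      by (rule convex_hull_combination4[where S = S_F and a = v1 and b = v8 and c = v5 and d = v2
            and u = "1 - q$2/21 - 19*q$3/21 - 20*q$4/21" and v = "q$4" and w = "q$3"
            and z = "q$2/21 - 2*q$3/21 - q$4/21"])
        (use F on 1 in \<open>simp_all add: S_F_eq S_F_point_defs vec4_eq_iff facet_ineqs_F_def field_simps\<close>)
  next
    case 2
    show ?thesis
      by (rule convex_hull_combination4[where S = S_F and a = v1 and b = v6 and c = v8 and d = v5
            and u = "1 - q$3 - q$4" and v = "2*q$3 + q$4 - q$2" and w = "q$2 - 2*q$3" and z = "q$3"])
        (use F on 2 in \<open>simp_all add: S_F_eq S_F_point_defs vec4_eq_iff facet_ineqs_F_def field_simps\<close>)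
  next
    case 3
    show ?thesis
      by (rule convex_hull_combination4[where S = S_F and a = v1 and b = v6 and c = v5 and d = v7
            and u = "1 - q$3 - q$4" and v = "q$4" and w = "q$2 - q$3" and z = "2*q$3 - q$2"])
        (use F on 3 in \<open>simp_all add: S_F_eq S_F_point_defs vec4_eq_iff facet_ineqs_F_def field_simps\<close>)
  qed
qed

lemma facet_2_2_1_1_in_hull:
  assumes F: "facet_ineqs_F (q$1) (q$2) (q$3) (q$4)" and on: "2*q$1 + 2*q$2 + q$3 + q$4 = 5"
  shows "q \<in> convex hull S_F"
proof -
  consider "q$2 \<le> q$1" "q$2 \<le> q$3" | "q$2 \<le> q$1" "q$3 \<le> q$2"
    | "q$1 \<le> q$2" "q$1 + q$2 \<le> 2*q$3" | "q$1 \<le> q$2" "2*q$3 \<le> q$1 + q$2"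
    by linarith
  then show ?thesis
  proof cases
    case 1
    show ?thesis
      by (rule convex_hull_combination4[where S = S_F and a = v4 and b = v6 and c = v7 and d = v3
            and u = "1 - q$1/2 - 3*q$2/10 - q$3/5" and v = "q$1/2 - q$2/2" and w = "q$2"
            and z = "q$3/5 - q$2/5"])
        (use F on 1 in \<open>simp_all add: S_F_eq S_F_point_defs vec4_eq_iff facet_ineqs_F_def field_simps\<close>)
  next
    case 2
    show ?thesis
      by (rule convex_hull_combination4[where S = S_F and a = v4 and b = v6 and c = v7 and d = v8
            and u = "1 - q$1/2 - q$2/2" and v = "q$1/2 - q$2/2" and w = "q$3" and z = "q$2 - q$3"])
        (use F on 2 in \<open>simp_all add: S_F_eq S_F_point_defs vec4_eq_iff facet_ineqs_F_def field_simps\<close>)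
  next
    case 3
    show ?thesis
      by (rule convex_hull_combination4[where S = S_F and a = v4 and b = v5 and c = v7 and d = v3
            and u = "1 - 2*q$1/5 - 2*q$2/5 - q$3/5" and v = "q$2/2 - q$1/2" and w = "q$1"
            and z = "q$3/5 - q$1/10 - q$2/10"])
        (use F on 3 in \<open>simp_all add: S_F_eq S_F_point_defs vec4_eq_iff facet_ineqs_F_def field_simps\<close>)
  next
    case 4
    show ?thesis
      by (rule convex_hull_combination4[where S = S_F and a = v4 and b = v5 and c = v7 and d = v8
            and u = "1 - q$1/2 - q$2/2" and v = "q$2/2 - q$1/2" and w = "q$1/2 - q$2/2 + q$3"
            and z = "q$1/2 + q$2/2 - q$3"])
        (use F on 4 in \<open>simp_all add: S_F_eq S_F_point_defs vec4_eq_iff facet_ineqs_F_def field_simps\<close>)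
  qed
qed

lemma facet_5_79_21_95_in_hull:
  assumes F: "facet_ineqs_F (q$1) (q$2) (q$3) (q$4)" and on: "5*q$1 + 79*q$2 + 21*q$3 + 95*q$4 = 105"
  shows "q \<in> convex hull S_F"
  by (rule convex_hull_combination4[where S = S_F and a = v1 and b = v3 and c = v6 and d = v7
        and u = "1 - 4*q$2/5 - q$3/5 - q$4" and v = "q$3/5 - q$2/5" and w = "q$4" and z = "q$2"])
    (use F on in \<open>simp_all add: S_F_eq S_F_point_defs vec4_eq_iff facet_ineqs_F_def field_simps\<close>)

lemma facet_79_5_95_21_in_hull:
  assumes F: "facet_ineqs_F (q$1) (q$2) (q$3) (q$4)" and on: "79*q$1 + 5*q$2 + 95*q$3 + 21*q$4 = 105"
  shows "q \<in> convex hull S_F"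
  by (rule convex_hull_combination4[where S = S_F and a = v2 and b = v4 and c = v5 and d = v8
        and u = "1 - 4*q$1/5 - q$3 - q$4/5" and v = "q$4/5 - q$1/5" and w = "q$3" and z = "q$1"])
    (use F on in \<open>simp_all add: S_F_eq S_F_point_defs vec4_eq_iff facet_ineqs_F_def field_simps\<close>)

lemma facet_point_in_hull_S_F:
  assumes "facet_ineqs_F (q$1) (q$2) (q$3) (q$4)"
    and "q$1 + q$2 + 19*q$3 + 19*q$4 = 21 \<or> 2*q$1 + 2*q$2 + q$3 + q$4 = 5 \<or>
      5*q$1 + 79*q$2 + 21*q$3 + 95*q$4 = 105 \<or> 79*q$1 + 5*q$2 + 95*q$3 + 21*q$4 = 105"
  shows "q \<in> convex hull S_F"
  using assms facet_1_1_19_19_in_hull facet_2_2_1_1_in_hull facet_5_79_21_95_in_hull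
    facet_79_5_95_21_in_hull by blast

text \<open>Shrink \<open>y\<close> towards the origin until the first facet inequality becomes tight.\<close>
lemma facet_ineqs_F_in_newton_polyhedron:
  assumes F: "facet_ineqs_F (y$1) (y$2) (y$3) (y$4)"
  shows "y \<in> newton_polyhedron S_F"
proof -
  define t1 where "t1 = (y$1 + y$2 + 19*y$3 + 19*y$4) / 21"
  define t2 where "t2 = (2*y$1 + 2*y$2 + y$3 + y$4) / 5"
  define t3 where "t3 = (5*y$1 + 79*y$2 + 21*y$3 + 95*y$4) / 105"
  define t4 where "t4 = (79*y$1 + 5*y$2 + 95*y$3 + 21*y$4) / 105"
  define t where "t = min (min t1 t2) (min t3 t4)"
  have "1 \<le> t"
    using F by (simp add: t_def t1_def t2_def t3_def t4_def facet_ineqs_F_def)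
  have "t \<le> t1" "t \<le> t2" "t \<le> t3" "t \<le> t4"
    by (simp_all add: t_def)
  define q where "q = (1 / t) *\<^sub>R y"
  have q: "q$1 = y$1 / t" "q$2 = y$2 / t" "q$3 = y$3 / t" "q$4 = y$4 / t"
    by (simp_all add: q_def)
  have "facet_ineqs_F (q$1) (q$2) (q$3) (q$4)"
    unfolding q using F \<open>1 \<le> t\<close> \<open>t \<le> t1\<close> \<open>t \<le> t2\<close> \<open>t \<le> t3\<close> \<open>t \<le> t4\<close>
    by (intro facet_ineqs_F_divide) (simp_all add: facet_ineqs_F_def t1_def t2_def t3_def t4_def)
  moreover have "q$1 + q$2 + 19*q$3 + 19*q$4 = 21 * (t1 / t)"
    "2*q$1 + 2*q$2 + q$3 + q$4 = 5 * (t2 / t)"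
    "5*q$1 + 79*q$2 + 21*q$3 + 95*q$4 = 105 * (t3 / t)"
    "79*q$1 + 5*q$2 + 95*q$3 + 21*q$4 = 105 * (t4 / t)"
    unfolding q t1_def t2_def t3_def t4_def using \<open>1 \<le> t\<close> by (simp_all add: field_simps)
  moreover have "t = t1 \<or> t = t2 \<or> t = t3 \<or> t = t4"
    by (auto simp: t_def min_def)
  ultimately have "q \<in> convex hull S_F"
    using \<open>1 \<le> t\<close> by (intro facet_point_in_hull_S_F) auto
  then show ?thesis
    using F \<open>1 \<le> t\<close> by (intro newton_polyhedron_scaled_hull[of y t])
      (auto simp: q_def facet_ineqs_F_def forall_4)
qed

lemma newton_polyhedron_S_F: "newton_polyhedron S_F = {y. facet_ineqs_F (y$1) (y$2) (y$3) (y$4)}"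
proof
  show "newton_polyhedron S_F \<subseteq> {y. facet_ineqs_F (y$1) (y$2) (y$3) (y$4)}"
    by (rule newton_polyhedron_least[OF convex_facet_ineqs_F])
      (auto simp: S_F_eq S_F_point_defs facet_ineqs_F_def forall_4)
qed (auto intro: facet_ineqs_F_in_newton_polyhedron)

lemma W_pt_in_newton_polyhedron: "W_pt \<in> newton_polyhedron (insert W_pt S_F)"
  using newton_polyhedron_shift[of W_pt "insert W_pt S_F" 0] by simp

lemma newton_polyhedron_S_F_subset: "newton_polyhedron S_F \<subseteq> newton_polyhedron (insert W_pt S_F)"
  by (rule newton_polyhedron_mono) blast

text \<open>Below the facet \<open>a + b + 19c + 19d = 21\<close> of \<open>\<Gamma>\<^sub>F\<close>, a point of \<open>\<Gamma>\<^sub>G\<close> lies on the segment from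
\<open>W\<close> to a point of \<open>\<Gamma>\<^sub>F\<close>, dividing it in the ratio \<open>s = a + b + 19c + 19d - 20\<close>.\<close>
lemma facet_ineqs_G_below_in_newton_polyhedron:
  assumes G: "facet_ineqs_G (y$1) (y$2) (y$3) (y$4)" and below: "y$1 + y$2 + 19*y$3 + 19*y$4 < 21"
  shows "y \<in> newton_polyhedron (insert W_pt S_F)"
proof -
  define s where "s = y$1 + y$2 + 19*y$3 + 19*y$4 - 20"
  consider "s = 0" | "0 < s" "s < 1"
    using G below by (force simp: s_def facet_ineqs_G_def)
  then show ?thesis
  proof cases
    case 1
    then have "y = W_pt"
      using G by (simp add: vec4_eq_iff W_pt_def s_def facet_ineqs_G_def)
    then show ?thesis
      using W_pt_in_newton_polyhedron by simp
  next
    case 2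
    define q where "q = (1 / s) *\<^sub>R (y - (1 - s) *\<^sub>R W_pt)"
    have q: "q$1 = (y$1 - 10 + 10 * s) / s" "q$2 = (y$2 - 10 + 10 * s) / s" "q$3 = y$3 / s" "q$4 = y$4 / s"
      using 2 by (simp_all add: q_def W_pt_def field_simps)
    have "facet_ineqs_F (q$1) (q$2) (q$3) (q$4)"
      unfolding q using G 2 by (intro facet_ineqs_F_divide) (simp_all add: s_def facet_ineqs_G_def)
    then have "q \<in> newton_polyhedron (insert W_pt S_F)"
      using facet_ineqs_F_in_newton_polyhedron newton_polyhedron_S_F_subset by blast
    then have "(1 - s) *\<^sub>R W_pt + s *\<^sub>R q \<in> newton_polyhedron (insert W_pt S_F)"
      using 2 W_pt_in_newton_polyhedron by (intro convexD[OF convex_newton_polyhedron]) auto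
    moreover have "(1 - s) *\<^sub>R W_pt + s *\<^sub>R q = y"
      using 2 by (simp add: q_def)
    ultimately show ?thesis
      by simp
  qed
qed

lemma newton_polyhedron_W_S_F:
  "newton_polyhedron (insert W_pt S_F) = {y. facet_ineqs_G (y$1) (y$2) (y$3) (y$4)}"
proof
  show "newton_polyhedron (insert W_pt S_F) \<subseteq> {y. facet_ineqs_G (y$1) (y$2) (y$3) (y$4)}"
    by (rule newton_polyhedron_least[OF convex_facet_ineqs_G])
      (auto simp: S_F_eq S_F_point_defs W_pt_def facet_ineqs_G_def forall_4)
next
  show "{y. facet_ineqs_G (y$1) (y$2) (y$3) (y$4)} \<subseteq> newton_polyhedron (insert W_pt S_F)"
  proof
    fix y :: "real^4"
    assume G: "y \<in> {y. facet_ineqs_G (y$1) (y$2) (y$3) (y$4)}"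
    show "y \<in> newton_polyhedron (insert W_pt S_F)"
    proof (cases "y$1 + y$2 + 19*y$3 + 19*y$4 < 21")
      case False
      then have "y \<in> newton_polyhedron S_F"
        using G by (simp add: newton_polyhedron_S_F facet_ineqs_F_def facet_ineqs_G_def)
      then show ?thesis
        using newton_polyhedron_S_F_subset by blast
    qed (use G facet_ineqs_G_below_in_newton_polyhedron in simp)
  qed
qed

lemma newton_polyhedron_S_F_psubset: "newton_polyhedron S_F \<subset> newton_polyhedron (insert W_pt S_F)"
proof -
  have "W_pt \<notin> newton_polyhedron S_F"
    by (simp add: newton_polyhedron_S_F W_pt_def facet_ineqs_F_def)
  then show ?thesis
    using newton_polyhedron_S_F_subset W_pt_in_newton_polyhedron by auto
qed

lemma emeasure_Collect_eq_nn_integral: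
  assumes "Measurable.pred M P"
  shows "emeasure M {x \<in> space M. P x} = (\<integral>\<^sup>+x. ennreal (if P x then 1 else 0) \<partial>M)"
proof -
  have "emeasure M {x \<in> space M. P x} = (\<integral>\<^sup>+x. indicator {x \<in> space M. P x} x \<partial>M)"
    using assms by simp
  also have "\<dots> = (\<integral>\<^sup>+x. ennreal (if P x then 1 else 0) \<partial>M)"
    by (intro nn_integral_cong) (simp add: indicator_def)
  finally show ?thesis .
qed

text \<open>The volume is invariant under shearing the \<open>i\<close>-th coordinate by a function of the others:
integrate over \<open>x\<^sub>i\<close> first and use translation invariance of the Lebesgue measure on each line.\<close>
lemma emeasure_PiM_shear:
  fixes J :: "'i set" and c :: "('i \<Rightarrow> real) \<Rightarrow> real" and P :: "('i \<Rightarrow> real) \<Rightarrow> bool"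
  assumes J: "finite J" "i \<in> J"
    and c: "\<And>x y. c (x(i := y)) = c x"
    and [measurable]: "Measurable.pred (PiM J (\<lambda>_. lborel)) P"
      "Measurable.pred (PiM J (\<lambda>_. lborel)) (\<lambda>x. P (x(i := x i + c x)))"
  shows "emeasure (PiM J (\<lambda>_. lborel)) {x \<in> space (PiM J (\<lambda>_. lborel)). P (x(i := x i + c x))} =
         emeasure (PiM J (\<lambda>_. lborel)) {x \<in> space (PiM J (\<lambda>_. lborel)). P x}"
proof -
  interpret product_sigma_finite "\<lambda>_::'i. lborel :: real measure" by standard
  define I where "I = J - {i}"
  have JI: "J = insert i I" "i \<notin> I" "finite I"
    using J by (auto simp: I_def)
  let ?M = "\<lambda>K. PiM K (\<lambda>_::'i. lborel :: real measure)"
  have line: "(\<integral>\<^sup>+ y. ennreal (if P (x(i := y + c x)) then 1 else 0) \<partial>lborel) =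
              (\<integral>\<^sup>+ y. ennreal (if P (x(i := y)) then 1 else 0) \<partial>lborel)"
    if x: "x \<in> space (?M I)" for x
  proof -
    have "(\<lambda>y. x(i := y)) \<in> measurable lborel (?M J)"
      using measurable_component_update[OF x JI(2)] JI(1) by simp
    then have "Measurable.pred lborel (\<lambda>y. P (x(i := y)))"
      by measurable
    then have "(\<lambda>y. ennreal (if P (x(i := y)) then 1 else 0)) \<in> borel_measurable borel"
      by simp
    from nn_integral_real_affine[OF this, of 1 "c x"] show ?thesis
      by (simp add: add.commute)
  qed
  have "emeasure (?M J) {x \<in> space (?M J). P (x(i := x i + c x))} =
        (\<integral>\<^sup>+x. ennreal (if P (x(i := x i + c x)) then 1 else 0) \<partial>?M (insert i I))"
    unfolding JI(1)[symmetric] by (rule emeasure_Collect_eq_nn_integral) measurable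
  also have "\<dots> = (\<integral>\<^sup>+x. (\<integral>\<^sup>+ y. ennreal (if P (x(i := y + c x)) then 1 else 0) \<partial>lborel) \<partial>?M I)"
    using JI by (subst product_nn_integral_insert) (auto simp: c simp flip: JI(1) intro!: nn_integral_cong)
  also have "\<dots> = (\<integral>\<^sup>+x. (\<integral>\<^sup>+ y. ennreal (if P (x(i := y)) then 1 else 0) \<partial>lborel) \<partial>?M I)"
    by (intro nn_integral_cong line)
  also have "\<dots> = (\<integral>\<^sup>+x. ennreal (if P x then 1 else 0) \<partial>?M (insert i I))"
    using JI by (subst product_nn_integral_insert) (auto simp flip: JI(1))
  also have "\<dots> = emeasure (?M J) {x \<in> space (?M J). P x}"
    unfolding JI(1)[symmetric] by (rule emeasure_Collect_eq_nn_integral[symmetric]) measurable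
  finally show ?thesis .
qed

lemma nn_integral_PiM_insert_section:
  fixes I :: "'i set" and h :: "('i \<Rightarrow> real) \<Rightarrow> real"
  assumes "h \<in> borel_measurable (PiM (insert i I) (\<lambda>_. lborel))"
    and "finite I" "i \<notin> I"
    and "\<And>x. x \<in> space (PiM I (\<lambda>_. lborel)) \<Longrightarrow>
      (\<integral>\<^sup>+y. ennreal (h (x(i := y))) \<partial>lborel) = ennreal (k x)"
  shows "(\<integral>\<^sup>+x. ennreal (h x) \<partial>PiM (insert i I) (\<lambda>_. lborel)) =
    (\<integral>\<^sup>+x. ennreal (k x) \<partial>PiM I (\<lambda>_. lborel))"
proof -
  interpret product_sigma_finite "\<lambda>_::'i. lborel :: real measure" by standard
  show ?thesis
    using assms by (subst product_nn_integral_insert) (auto intro!: nn_integral_cong)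
qed

lemma nn_integral_FTC_guarded:
  fixes f F :: "real \<Rightarrow> real"
  assumes "G \<Longrightarrow> a \<le> b"
    and "\<And>y. G \<Longrightarrow> a \<le> y \<Longrightarrow> y \<le> b \<Longrightarrow> (F has_real_derivative f y) (at y)"
    and "\<And>y. G \<Longrightarrow> a \<le> y \<Longrightarrow> y \<le> b \<Longrightarrow> 0 \<le> f y"
    and "f \<in> borel_measurable borel"
  shows "(\<integral>\<^sup>+y. ennreal (if G \<and> a \<le> y \<and> y \<le> b then f y else 0) \<partial>lborel) =
    ennreal (if G then F b - F a else 0)"
proof (cases G)
  case True
  have "(\<integral>\<^sup>+y. ennreal (if G \<and> a \<le> y \<and> y \<le> b then f y else 0) \<partial>lborel) =
        (\<integral>\<^sup>+y. ennreal (f y) * indicator {a..b} y \<partial>lborel)"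
    using True by (intro nn_integral_cong) (auto simp: indicator_def)
  also have "\<dots> = ennreal (F b - F a)"
    using assms True by (intro nn_integral_FTC_Icc) auto
  finally show ?thesis
    using True by simp
qed simp

lemma nn_integral_PiM_singleton_FTC:
  fixes p P :: "real \<Rightarrow> real"
  assumes "\<And>y. 0 \<le> y \<Longrightarrow> y \<le> 1 \<Longrightarrow> (P has_real_derivative p y) (at y)"
    and "\<And>y. 0 \<le> y \<Longrightarrow> y \<le> 1 \<Longrightarrow> 0 \<le> p y"
    and [measurable]: "p \<in> borel_measurable borel"
  shows "(\<integral>\<^sup>+x. ennreal (if 0 \<le> x i \<and> x i < 1 then p (x i) else 0) \<partial>PiM {i} (\<lambda>_. lborel)) =
    ennreal (P 1 - P 0)"
proof -
  interpret product_sigma_finite "\<lambda>_::'i. lborel :: real measure" by standard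
  have "(\<integral>\<^sup>+x. ennreal (if 0 \<le> x i \<and> x i < 1 then p (x i) else 0) \<partial>PiM {i} (\<lambda>_. lborel)) =
        (\<integral>\<^sup>+y. ennreal (if 0 \<le> y \<and> y < 1 then p y else 0) \<partial>lborel)"
    by (rule product_nn_integral_singleton[where f = "\<lambda>y. ennreal (if 0 \<le> y \<and> y < 1 then p y else 0)"])
      measurable
  also have "\<dots> = (\<integral>\<^sup>+y. ennreal (if True \<and> 0 \<le> y \<and> y \<le> 1 then p y else 0) \<partial>lborel)"
    by (intro nn_integral_cong_AE) (use AE_lborel_singleton[of 1] in \<open>auto elim!: eventually_mono\<close>)
  also have "\<dots> = ennreal (P 1 - P 0)"
    using assms by (subst nn_integral_FTC_guarded) auto
  finally show ?thesis .
qed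

definition sheared_gap :: "real \<Rightarrow> real \<Rightarrow> real \<Rightarrow> real \<Rightarrow> bool" where
  "sheared_gap s b c d \<longleftrightarrow>
     s < 1 \<and> 0 \<le> c \<and> 0 \<le> d \<and> c + d \<le> s \<and> c + 10 - 10 * s \<le> b \<and> b \<le> 10 + 11 * s - 19*c - 20*d"

lemma nn_integral_sheared_gap_b:
  "(\<integral>\<^sup>+y. ennreal (if sheared_gap s y c d then 1 else 0) \<partial>lborel) =
   ennreal (if s < 1 \<and> 0 \<le> c \<and> 0 \<le> d \<and> c + d \<le> s then 21 * s - 20*c - 20*d else 0)"
proof -
  let ?G = "s < 1 \<and> 0 \<le> c \<and> 0 \<le> d \<and> c + d \<le> s"
  have "(\<integral>\<^sup>+y. ennreal (if sheared_gap s y c d then 1 else 0) \<partial>lborel) =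
        (\<integral>\<^sup>+y. ennreal (if ?G \<and> c + 10 - 10 * s \<le> y \<and> y \<le> 10 + 11 * s - 19*c - 20*d then 1 else 0) \<partial>lborel)"
    by (intro nn_integral_cong) (auto simp: sheared_gap_def)
  also have "\<dots> = ennreal (if ?G then (10 + 11 * s - 19*c - 20*d) - (c + 10 - 10 * s) else 0)"
    by (rule nn_integral_FTC_guarded[where F = "\<lambda>y. y"]) (auto intro!: derivative_eq_intros)
  finally show ?thesis
    by (simp add: algebra_simps)
qed

lemma nn_integral_sheared_gap_c:
  "(\<integral>\<^sup>+y. ennreal (if s < 1 \<and> 0 \<le> y \<and> 0 \<le> d \<and> y + d \<le> s then 21 * s - 20*y - 20*d else 0) \<partial>lborel) =
   ennreal (if s < 1 \<and> 0 \<le> d \<and> d \<le> s then (s - d) * (11 * s - 10*d) else 0)"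
proof -
  let ?G = "s < 1 \<and> 0 \<le> d \<and> d \<le> s"
  have "(\<integral>\<^sup>+y. ennreal (if s < 1 \<and> 0 \<le> y \<and> 0 \<le> d \<and> y + d \<le> s then 21 * s - 20*y - 20*d else 0) \<partial>lborel) =
        (\<integral>\<^sup>+y. ennreal (if ?G \<and> 0 \<le> y \<and> y \<le> s - d then 21 * s - 20*y - 20*d else 0) \<partial>lborel)"
    by (intro nn_integral_cong) auto
  also have "\<dots> = ennreal (if ?G then (21 * s - 20*d) * (s - d) - 10 * (s - d)^2 else 0)"
    by (subst nn_integral_FTC_guarded[where F = "\<lambda>y. (21 * s - 20*d) * y - 10 * y^2"])
      (auto intro!: derivative_eq_intros)
  finally show ?thesis
    by (simp add: algebra_simps power2_eq_square)
qed

lemma nn_integral_sheared_gap_d: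
  "(\<integral>\<^sup>+y. ennreal (if s < 1 \<and> 0 \<le> y \<and> y \<le> s then (s - y) * (11 * s - 10*y) else 0) \<partial>lborel) =
   ennreal (if 0 \<le> s \<and> s < 1 then 23/6 * s^3 else 0)"
proof -
  let ?G = "0 \<le> s \<and> s < 1"
  have "(\<integral>\<^sup>+y. ennreal (if s < 1 \<and> 0 \<le> y \<and> y \<le> s then (s - y) * (11 * s - 10*y) else 0) \<partial>lborel) =
        (\<integral>\<^sup>+y. ennreal (if ?G \<and> 0 \<le> y \<and> y \<le> s then (s - y) * (11 * s - 10*y) else 0) \<partial>lborel)"
    by (intro nn_integral_cong) auto
  also have "\<dots> = ennreal (if ?G then 23/6 * s^3 else 0)"
  proof (subst nn_integral_FTC_guarded[where F = "\<lambda>y. 11 * s^2 * y - 21/2 * s * y^2 + 10/3 * y^3"])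
    show "0 \<le> (s - y) * (11 * s - 10*y)" if "?G" "0 \<le> y" "y \<le> s" for y
      using that by (intro mult_nonneg_nonneg) auto
  qed (auto intro!: derivative_eq_intros simp: algebra_simps power2_eq_square power3_eq_cube)
  finally show ?thesis .
qed

lemma nn_integral_sheared_gap_c_d0:
  "(\<integral>\<^sup>+y. ennreal (if s < 1 \<and> 0 \<le> y \<and> y \<le> s then 21 * s - 20*y else 0) \<partial>lborel) =
   ennreal (if 0 \<le> s \<and> s < 1 then 11 * s^2 else 0)"
  using nn_integral_sheared_gap_c[of s 0]
  by (cases "0 \<le> s \<and> s < 1") (auto simp: power2_eq_square cong: if_cong)

lemma pred_le_real [measurable]:
  fixes f g :: "'a \<Rightarrow> real"
  assumes [measurable]: "f \<in> borel_measurable M" "g \<in> borel_measurable M"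
  shows "Measurable.pred M (\<lambda>x. f x \<le> g x)"
  using borel_measurable_le[OF assms] by (simp add: pred_def)

lemma pred_sheared_gap [measurable]:
  assumes [measurable]: "f \<in> borel_measurable M" "g \<in> borel_measurable M"
    "h \<in> borel_measurable M" "k \<in> borel_measurable M"
  shows "Measurable.pred M (\<lambda>x. sheared_gap (f x) (g x) (h x) (k x))"
  unfolding sheared_gap_def by measurable

definition embed_coord :: "'n set \<Rightarrow> ('n \<Rightarrow> real) \<Rightarrow> 'n \<Rightarrow> real" where
  "embed_coord J x i = (if i \<in> J then x i else 0)"

lemma embed_coord_in [simp]: "i \<in> J \<Longrightarrow> embed_coord J x i = x i"
  by (simp add: embed_coord_def)

lemma embed_coord_notin [simp]: "i \<notin> J \<Longrightarrow> embed_coord J x i = 0"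
  by (simp add: embed_coord_def)

lemma embed_coord_upd [simp]: "i \<noteq> k \<Longrightarrow> embed_coord J (x(i := y)) k = embed_coord J x k"
  by (simp add: embed_coord_def)

lemma measurable_embed_coord [measurable]:
  "(\<lambda>x. embed_coord J x i) \<in> borel_measurable (PiM J (\<lambda>_. lborel))"
  by (cases "i \<in> J") (simp_all add: embed_coord_def)

definition gap :: "real \<Rightarrow> real \<Rightarrow> real \<Rightarrow> real \<Rightarrow> bool" where
  "gap a b c d \<longleftrightarrow> facet_ineqs_G a b c d \<and> \<not> facet_ineqs_F a b c d"

lemma gap_iff_sheared: "gap a b c d \<longleftrightarrow> sheared_gap (a + (b + 19*c + 19*d - 20)) b c d"
  unfolding gap_def facet_ineqs_G_def facet_ineqs_F_def sheared_gap_def by (auto; linarith)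

lemma gap_pos: "gap a b c d \<Longrightarrow> 0 < a \<and> 0 < b"
  unfolding gap_def facet_ineqs_G_def facet_ineqs_F_def by linarith

lemma facet_ineqs_F_if_large:
  "0 \<le> a \<Longrightarrow> 0 \<le> b \<Longrightarrow> 0 \<le> c \<Longrightarrow> 0 \<le> d \<Longrightarrow> 21 < a \<or> 21 < b \<or> 21 < c \<or> 21 < d \<Longrightarrow>
    facet_ineqs_F a b c d"
  unfolding facet_ineqs_F_def by (elim disjE; intro conjI; linarith)

definition gap_set :: "4 set \<Rightarrow> (4 \<Rightarrow> real) set" where
  "gap_set J = {x \<in> space (PiM J (\<lambda>_. lborel)).
     gap (embed_coord J x 1) (embed_coord J x 2) (embed_coord J x 3) (embed_coord J x 4)}"

lemma emeasure_gap_eq_sheared: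
  fixes J :: "4 set"
  assumes "1 \<in> J" "2 \<in> J"
  shows "emeasure (PiM J (\<lambda>_. lborel)) (gap_set J) =
    emeasure (PiM J (\<lambda>_. lborel)) {x \<in> space (PiM J (\<lambda>_. lborel)).
      sheared_gap (x 1) (x 2) (embed_coord J x 3) (embed_coord J x 4)}"
proof -
  let ?P = "\<lambda>x. sheared_gap (x 1) (x 2) (embed_coord J x 3) (embed_coord J x 4)"
  let ?c = "\<lambda>x. x 2 + 19 * embed_coord J x 3 + 19 * embed_coord J x 4 - 20"
  have "gap_set J = {x \<in> space (PiM J (\<lambda>_. lborel)). ?P (x(1 := x 1 + ?c x))}"
    using assms by (simp add: gap_set_def gap_iff_sheared)
  moreover have "emeasure (PiM J (\<lambda>_. lborel)) {x \<in> space (PiM J (\<lambda>_. lborel)). ?P (x(1 := x 1 + ?c x))} =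
    emeasure (PiM J (\<lambda>_. lborel)) {x \<in> space (PiM J (\<lambda>_. lborel)). ?P x}"
  proof (rule emeasure_PiM_shear)
    have [measurable]: "(\<lambda>x. x 1) \<in> borel_measurable (PiM J (\<lambda>_. lborel))"
      "(\<lambda>x. x 2) \<in> borel_measurable (PiM J (\<lambda>_. lborel))"
      using assms by (simp_all add: measurable_component_singleton)
    show "Measurable.pred (PiM J (\<lambda>_. lborel)) ?P"
      by measurable
    show "Measurable.pred (PiM J (\<lambda>_. lborel)) (\<lambda>x. ?P (x(1 := x 1 + ?c x)))"
      by simp measurable
  qed (use assms in simp_all)
  ultimately show ?thesis
    by (simp only:)
qed

lemma emeasure_gap_set_1234:
  "emeasure (PiM {1,2,3,4::4} (\<lambda>_. lborel)) (gap_set {1,2,3,4}) = ennreal (23/24)"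
proof -
  let ?M = "\<lambda>K. PiM K (\<lambda>_::4. lborel :: real measure)"
  have J: "{1,2,3,4::4} = insert 2 {1,3,4}" "{1,3,4::4} = insert 3 {1,4}" "{1,4::4} = insert 4 {1}"
    by auto
  have "emeasure (?M {1,2,3,4}) (gap_set {1,2,3,4}) =
        emeasure (?M {1,2,3,4}) {x \<in> space (?M {1,2,3,4}). sheared_gap (x 1) (x 2) (x 3) (x 4)}"
    by (simp add: emeasure_gap_eq_sheared)
  also have "\<dots> = (\<integral>\<^sup>+x. ennreal (if sheared_gap (x 1) (x 2) (x 3) (x 4) then 1 else 0) \<partial>?M (insert 2 {1,3,4}))"
    unfolding J(1) by (rule emeasure_Collect_eq_nn_integral) measurable
  also have "\<dots> = (\<integral>\<^sup>+x. ennreal (if x 1 < 1 \<and> 0 \<le> x 3 \<and> 0 \<le> x 4 \<and> x 3 + x 4 \<le> x 1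
                       then 21 * x 1 - 20 * x 3 - 20 * x 4 else 0) \<partial>?M (insert 3 {1,4}))"
    unfolding J(2)[symmetric]
    by (rule nn_integral_PiM_insert_section) (measurable, simp_all add: nn_integral_sheared_gap_b cong: if_cong)
  also have "\<dots> = (\<integral>\<^sup>+x. ennreal (if x 1 < 1 \<and> 0 \<le> x 4 \<and> x 4 \<le> x 1
                       then (x 1 - x 4) * (11 * x 1 - 10 * x 4) else 0) \<partial>?M (insert 4 {1}))"
    unfolding J(3)[symmetric]
    by (rule nn_integral_PiM_insert_section) (measurable, simp_all add: nn_integral_sheared_gap_c cong: if_cong)
  also have "\<dots> = (\<integral>\<^sup>+x. ennreal (if 0 \<le> x 1 \<and> x 1 < 1 then 23/6 * x 1 ^ 3 else 0) \<partial>?M {1})"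
    by (rule nn_integral_PiM_insert_section) (measurable, simp_all add: nn_integral_sheared_gap_d cong: if_cong)
  also have "\<dots> = ennreal (23/24 * 1 ^ 4 - 23/24 * 0 ^ 4)"
    by (rule nn_integral_PiM_singleton_FTC) (auto intro!: derivative_eq_intros simp: power3_eq_cube)
  finally show ?thesis
    by simp
qed

lemma emeasure_gap_set_123:
  "emeasure (PiM {1,2,3::4} (\<lambda>_. lborel)) (gap_set {1,2,3}) = ennreal (11/3)"
proof -
  let ?M = "\<lambda>K. PiM K (\<lambda>_::4. lborel :: real measure)"
  have J: "{1,2,3::4} = insert 2 {1,3}" "{1,3::4} = insert 3 {1}"
    by auto
  have "emeasure (?M {1,2,3}) (gap_set {1,2,3}) =
        emeasure (?M {1,2,3}) {x \<in> space (?M {1,2,3}). sheared_gap (x 1) (x 2) (x 3) 0}"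
    by (simp add: emeasure_gap_eq_sheared)
  also have "\<dots> = (\<integral>\<^sup>+x. ennreal (if sheared_gap (x 1) (x 2) (x 3) 0 then 1 else 0) \<partial>?M (insert 2 {1,3}))"
    unfolding J(1) by (rule emeasure_Collect_eq_nn_integral) measurable
  also have "\<dots> = (\<integral>\<^sup>+x. ennreal (if x 1 < 1 \<and> 0 \<le> x 3 \<and> x 3 \<le> x 1
                       then 21 * x 1 - 20 * x 3 else 0) \<partial>?M (insert 3 {1}))"
    unfolding J(2)[symmetric]
    by (rule nn_integral_PiM_insert_section) (measurable, simp_all add: nn_integral_sheared_gap_b cong: if_cong)
  also have "\<dots> = (\<integral>\<^sup>+x. ennreal (if 0 \<le> x 1 \<and> x 1 < 1 then 11 * x 1 ^ 2 else 0) \<partial>?M {1})"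
    by (rule nn_integral_PiM_insert_section) (measurable, simp_all add: nn_integral_sheared_gap_c_d0 cong: if_cong)
  also have "\<dots> = ennreal (11/3 * 1 ^ 3 - 11/3 * 0 ^ 3)"
    by (rule nn_integral_PiM_singleton_FTC) (auto intro!: derivative_eq_intros simp: power2_eq_square)
  finally show ?thesis
    by simp
qed

lemma emeasure_gap_set_124:
  "emeasure (PiM {1,2,4::4} (\<lambda>_. lborel)) (gap_set {1,2,4}) = ennreal (11/3)"
proof -
  let ?M = "\<lambda>K. PiM K (\<lambda>_::4. lborel :: real measure)"
  have J: "{1,2,4::4} = insert 2 {1,4}" "{1,4::4} = insert 4 {1}"
    by auto
  have "emeasure (?M {1,2,4}) (gap_set {1,2,4}) =
        emeasure (?M {1,2,4}) {x \<in> space (?M {1,2,4}). sheared_gap (x 1) (x 2) 0 (x 4)}"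
    by (simp add: emeasure_gap_eq_sheared)
  also have "\<dots> = (\<integral>\<^sup>+x. ennreal (if sheared_gap (x 1) (x 2) 0 (x 4) then 1 else 0) \<partial>?M (insert 2 {1,4}))"
    unfolding J(1) by (rule emeasure_Collect_eq_nn_integral) measurable
  also have "\<dots> = (\<integral>\<^sup>+x. ennreal (if x 1 < 1 \<and> 0 \<le> x 4 \<and> x 4 \<le> x 1
                       then 21 * x 1 - 20 * x 4 else 0) \<partial>?M (insert 4 {1}))"
    unfolding J(2)[symmetric]
    by (rule nn_integral_PiM_insert_section) (measurable, simp_all add: nn_integral_sheared_gap_b cong: if_cong)
  also have "\<dots> = (\<integral>\<^sup>+x. ennreal (if 0 \<le> x 1 \<and> x 1 < 1 then 11 * x 1 ^ 2 else 0) \<partial>?M {1})"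
    by (rule nn_integral_PiM_insert_section) (measurable, simp_all add: nn_integral_sheared_gap_c_d0 cong: if_cong)
  also have "\<dots> = ennreal (11/3 * 1 ^ 3 - 11/3 * 0 ^ 3)"
    by (rule nn_integral_PiM_singleton_FTC) (auto intro!: derivative_eq_intros simp: power2_eq_square)
  finally show ?thesis
    by simp
qed

lemma emeasure_gap_set_12:
  "emeasure (PiM {1,2::4} (\<lambda>_. lborel)) (gap_set {1,2}) = ennreal (21/2)"
proof -
  let ?M = "\<lambda>K. PiM K (\<lambda>_::4. lborel :: real measure)"
  have J: "{1,2::4} = insert 2 {1}"
    by auto
  have "emeasure (?M {1,2}) (gap_set {1,2}) =
        emeasure (?M {1,2}) {x \<in> space (?M {1,2}). sheared_gap (x 1) (x 2) 0 0}"
    by (simp add: emeasure_gap_eq_sheared)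
  also have "\<dots> = (\<integral>\<^sup>+x. ennreal (if sheared_gap (x 1) (x 2) 0 0 then 1 else 0) \<partial>?M (insert 2 {1}))"
    unfolding J by (rule emeasure_Collect_eq_nn_integral) measurable
  also have "\<dots> = (\<integral>\<^sup>+x. ennreal (if 0 \<le> x 1 \<and> x 1 < 1 then 21 * x 1 else 0) \<partial>?M {1})"
    by (rule nn_integral_PiM_insert_section) (measurable, simp_all add: nn_integral_sheared_gap_b conj_commute cong: if_cong)
  also have "\<dots> = ennreal (21/2 * 1 ^ 2 - 21/2 * 0 ^ 2)"
    by (rule nn_integral_PiM_singleton_FTC) (auto intro!: derivative_eq_intros simp: power2_eq_square)
  finally show ?thesis
    by simp
qed

definition orthant_minus :: "(real \<Rightarrow> real \<Rightarrow> real \<Rightarrow> real \<Rightarrow> bool) \<Rightarrow> 4 set \<Rightarrow> (4 \<Rightarrow> real) set" where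
  "orthant_minus p J = {x \<in> space (PiM J (\<lambda>_. lborel)).
     0 \<le> embed_coord J x 1 \<and> 0 \<le> embed_coord J x 2 \<and> 0 \<le> embed_coord J x 3 \<and> 0 \<le> embed_coord J x 4 \<and>
     \<not> p (embed_coord J x 1) (embed_coord J x 2) (embed_coord J x 3) (embed_coord J x 4)}"

lemma coord_vol_eq_measure_orthant_minus:
  "coord_vol {y::real^4. p (y$1) (y$2) (y$3) (y$4)} J = measure (PiM J (\<lambda>_. lborel)) (orthant_minus p J)"
proof -
  have "(\<forall>j\<in>J. 0 \<le> x j) \<longleftrightarrow> (\<forall>k. 0 \<le> embed_coord J x k)" for x
    by (auto simp: embed_coord_def)
  then show ?thesis
    unfolding coord_vol_def orthant_minus_def embed_coord_def[symmetric] by (simp add: space_PiM forall_4)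
qed

lemma sets_orthant_minus_facet_ineqs_F: "orthant_minus facet_ineqs_F J \<in> sets (PiM J (\<lambda>_. lborel))"
  unfolding orthant_minus_def facet_ineqs_F_def by measurable

lemma sets_orthant_minus_facet_ineqs_G: "orthant_minus facet_ineqs_G J \<in> sets (PiM J (\<lambda>_. lborel))"
  unfolding orthant_minus_def facet_ineqs_G_def by measurable

lemma orthant_minus_facet_ineqs_F_bounded: "orthant_minus facet_ineqs_F J \<subseteq> PiE J (\<lambda>_. {0..21})"
proof
  fix x
  assume x: "x \<in> orthant_minus facet_ineqs_F J"
  then have "\<not> (21 < embed_coord J x 1 \<or> 21 < embed_coord J x 2 \<or> 21 < embed_coord J x 3 \<or>
      21 < embed_coord J x 4)"
    using facet_ineqs_F_if_large by (auto simp: orthant_minus_def)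
  then have "0 \<le> embed_coord J x k \<and> embed_coord J x k \<le> 21" for k
    using x exhaust_4[of k] by (auto simp: orthant_minus_def)
  then have "x j \<in> {0..21}" if "j \<in> J" for j
    using that embed_coord_in[of j J x] by (metis atLeastAtMost_iff)
  moreover have "x \<in> PiE J (\<lambda>_. UNIV)"
    using x by (simp add: orthant_minus_def space_PiM)
  ultimately show "x \<in> PiE J (\<lambda>_. {0..21})"
    by (auto simp: PiE_iff)
qed

lemma emeasure_orthant_minus_facet_ineqs_F_finite:
  "emeasure (PiM J (\<lambda>_. lborel)) (orthant_minus facet_ineqs_F J) \<noteq> \<infinity>"
proof -
  interpret product_sigma_finite "\<lambda>_::4. lborel :: real measure" by standard
  have "emeasure (PiM J (\<lambda>_. lborel)) (orthant_minus facet_ineqs_F J) \<le>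
        emeasure (PiM J (\<lambda>_. lborel)) (PiE J (\<lambda>_. {0..21::real}))"
    by (rule emeasure_mono[OF orthant_minus_facet_ineqs_F_bounded]) (simp add: sets_PiM_I_finite)
  also have "\<dots> < \<infinity>"
    by (subst emeasure_PiM) (auto simp: power_less_top_ennreal)
  finally show ?thesis
    by simp
qed

lemma coord_vol_difference:
  "coord_vol (newton_polyhedron S_F) J - coord_vol (newton_polyhedron (insert W_pt S_F)) J =
   measure (PiM J (\<lambda>_. lborel)) (gap_set J)"
proof -
  have "orthant_minus facet_ineqs_G J \<subseteq> orthant_minus facet_ineqs_F J"
    using facet_ineqs_F_imp_G by (auto simp: orthant_minus_def)
  moreover have "orthant_minus facet_ineqs_F J - orthant_minus facet_ineqs_G J = gap_set J"
    by (auto simp: orthant_minus_def gap_set_def gap_def facet_ineqs_G_def)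
  ultimately have "measure (PiM J (\<lambda>_. lborel)) (gap_set J) =
      measure (PiM J (\<lambda>_. lborel)) (orthant_minus facet_ineqs_F J) -
      measure (PiM J (\<lambda>_. lborel)) (orthant_minus facet_ineqs_G J)"
    using measure_Diff[OF emeasure_orthant_minus_facet_ineqs_F_finite[of J]
        sets_orthant_minus_facet_ineqs_F sets_orthant_minus_facet_ineqs_G] by simp
  then show ?thesis
    unfolding newton_polyhedron_S_F newton_polyhedron_W_S_F coord_vol_eq_measure_orthant_minus by simp
qed

lemma supset_12_cases:
  fixes J :: "4 set"
  assumes "1 \<in> J" "2 \<in> J"
  obtains "J = {1,2}" | "J = {1,2,3}" | "J = {1,2,4}" | "J = {1,2,3,4}"
proof -
  have k: "k = 1 \<or> k = 2 \<or> k = 3 \<or> k = 4" for k :: 4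
    by (rule exhaust_4)
  consider "3 \<in> J" "4 \<in> J" | "3 \<in> J" "4 \<notin> J" | "3 \<notin> J" "4 \<in> J" | "3 \<notin> J" "4 \<notin> J"
    by blast
  then show ?thesis
  proof cases
    case 1
    then have "J = {1,2,3,4}" using assms k by blast
    then show ?thesis by (rule that)
  next
    case 2
    then have "J = {1,2,3}" using assms k by blast
    then show ?thesis by (rule that)
  next
    case 3
    then have "J = {1,2,4}" using assms k by blast
    then show ?thesis by (rule that)
  next
    case 4
    then have "J = {1,2}" using assms k by blast
    then show ?thesis by (rule that)
  qed
qed

lemma measure_gap_set:
  "measure (PiM J (\<lambda>_. lborel)) (gap_set J) =
   (if J = {1,2} then 21/2 else 0) + (if J = {1,2,3} then 11/3 else 0) +
   (if J = {1,2,4} then 11/3 else 0) + (if J = {1,2,3,4} then 23/24 else 0)"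
proof (cases "1 \<in> J \<and> 2 \<in> J")
  case True
  have distinct: "{1,2::4} \<noteq> {1,2,3}" "{1,2::4} \<noteq> {1,2,4}" "{1,2::4} \<noteq> {1,2,3,4}"
    "{1,2,3::4} \<noteq> {1,2,4}" "{1,2,3::4} \<noteq> {1,2,3,4}" "{1,2,4::4} \<noteq> {1,2,3,4}"
    by (auto dest: arg_cong[of _ _ "\<lambda>A. (3::4) \<in> A"] arg_cong[of _ _ "\<lambda>A. (4::4) \<in> A"])
  consider "J = {1,2}" | "J = {1,2,3}" | "J = {1,2,4}" | "J = {1,2,3,4}"
    by (rule supset_12_cases) (use True in auto)
  then show ?thesis
  proof cases
    case 1
    then show ?thesis using emeasure_gap_set_12 distinct by (simp add: measure_def)
  next
    case 2
    then show ?thesis using emeasure_gap_set_123 distinct by (simp add: measure_def)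
  next
    case 3
    then show ?thesis using emeasure_gap_set_124 distinct by (simp add: measure_def)
  next
    case 4
    then show ?thesis using emeasure_gap_set_1234 distinct by (simp add: measure_def)
  qed
next
  case False
  then have "gap_set J = {}"
    by (auto dest!: gap_pos simp: gap_set_def embed_coord_def)
  moreover have "J \<noteq> {1,2}" "J \<noteq> {1,2,3}" "J \<noteq> {1,2,4}" "J \<noteq> {1,2,3,4}"
    using False by auto
  ultimately show ?thesis
    by simp
qed

theorem mainTheorem17:
  shows "newton_polyhedron S_F \<subset> newton_polyhedron (insert W_pt S_F) \<and>
         newton_number (newton_polyhedron S_F) = newton_number (newton_polyhedron (insert W_pt S_F))"
proof
  show "newton_polyhedron S_F \<subset> newton_polyhedron (insert W_pt S_F)"
    by (rule newton_polyhedron_S_F_psubset)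
  let ?w = "\<lambda>J::4 set. (-1) ^ (CARD(4) - card J) * fact (card J) :: real"
  have "newton_number (newton_polyhedron S_F) - newton_number (newton_polyhedron (insert W_pt S_F)) =
    (\<Sum>J\<in>{J. J \<noteq> {}}. ?w J * (coord_vol (newton_polyhedron S_F) J -
       coord_vol (newton_polyhedron (insert W_pt S_F)) J))"
    unfolding newton_number_def by (simp add: right_diff_distrib sum_subtractf)
  also have "\<dots> = (\<Sum>J\<in>{J. J \<noteq> {}}. (if J = {1,2} then ?w J * (21/2) else 0) +
      (if J = {1,2,3} then ?w J * (11/3) else 0) + (if J = {1,2,4} then ?w J * (11/3) else 0) +
      (if J = {1,2,3,4} then ?w J * (23/24) else 0))"
    unfolding coord_vol_difference measure_gap_set by (intro sum.cong refl) (simp add: distrib_left)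
  also have "\<dots> = 0"
    by (simp add: sum.distrib)
  finally show "newton_number (newton_polyhedron S_F) = newton_number (newton_polyhedron (insert W_pt S_F))"
    by simp
qed

end
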